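(* Let $L$ be an interval locale and $f:E\to F$ a morphism of sheaves of monomorphisms on $L_{+}$. If $f$ is a stalkwise epimorphism (respectively stalkwise monomorphism, stalkwise isomorphism), then $f$ is an epimorphism (respectively monomorphism, isomorphism) of sheaves on $L_{+}$.
   Context: A locale $L$ is a complete lattice in which finite meets distribute over arbitrary joins, with Grothendieck topology: $\{b_j\le a\}$ covers $a$ iff $\bigvee_j b_j=a$. $L$ is an interval if it is totally ordered and densely ordered. $1$ is the top element and $i$ the bottom element of $L$; $L_{+}=L\sqcup\{0\}$ with a new bottom $0<i$. A sheaf of monomorphisms on $L_{+}$ is a sheaf $F$ with $F(b)\to F(a)$ injective for all $a\le b$ in $L$. For a sheaf $F$ on $L_{+}$ and $x\in L_{+}\setminus\{1\}$, the stalk is $F_x=\varinjlim_{s\in L_{+},\,x<s}F(s)$ (so $F_0\cong F(i)$). A map $E\to F$ is a stalkwise epimorphism (monomorphism, isomorphism) if $E_x\to F_x$ is surjective (injective, bijective) for all $x\in L_{+}\setminus\{1\}$. *)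

theory Defs
  imports Main "HOL-Library.Option_ord"
begin

text \<open>The locale L is a type 'a of class complete_linorder and dense_order
 (a complete, totally and densely ordered lattice: an interval).
 L_+ is the type 'a option ordered by Option_ord: None is the new bottom 0,
 Some a corresponds to a in L.  A (pre)sheaf on L_+ is given by its sets of
 sections F :: 'a option => 'b set together with restriction maps
 r b a :: 'b => 'b from F b to F a (for a <= b).\<close>

definition is_presheaf :: "('a::complete_lattice option \<Rightarrow> 'b set) \<Rightarrow> ('a option \<Rightarrow> 'a option \<Rightarrow> 'b \<Rightarrow> 'b) \<Rightarrow> bool" where
  "is_presheaf F r \<longleftrightarrow>
     (\<forall>a b. a \<le> b \<longrightarrow> (\<forall>x\<in>F b. r b a x \<in> F a)) \<and>
     (\<forall>a. \<forall>x\<in>F a. r a a x = x) \<and>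
     (\<forall>a b c. a \<le> b \<longrightarrow> b \<le> c \<longrightarrow> (\<forall>x\<in>F c. r b a (r c b x) = r c a x))"

definition is_sheaf :: "('a::complete_lattice option \<Rightarrow> 'b set) \<Rightarrow> ('a option \<Rightarrow> 'a option \<Rightarrow> 'b \<Rightarrow> 'b) \<Rightarrow> bool" where
  "is_sheaf F r \<longleftrightarrow> is_presheaf F r \<and>
     (\<forall>a S s. (\<forall>b\<in>S. b \<le> a) \<longrightarrow> Sup S = a \<longrightarrow> (\<forall>b\<in>S. s b \<in> F b) \<longrightarrow>
        (\<forall>b\<in>S. \<forall>c\<in>S. r b (inf b c) (s b) = r c (inf b c) (s c)) \<longrightarrow>
        (\<exists>!x. x \<in> F a \<and> (\<forall>b\<in>S. r a b x = s b)))"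

definition is_mono_sheaf :: "('a::complete_lattice option \<Rightarrow> 'b set) \<Rightarrow> ('a option \<Rightarrow> 'a option \<Rightarrow> 'b \<Rightarrow> 'b) \<Rightarrow> bool" where
  "is_mono_sheaf F r \<longleftrightarrow> is_sheaf F r \<and>
     (\<forall>a b. a \<le> b \<longrightarrow> inj_on (r (Some b) (Some a)) (F (Some b)))"

definition sheaf_mor ::
  "('a::complete_lattice option \<Rightarrow> 'b set) \<Rightarrow> ('a option \<Rightarrow> 'a option \<Rightarrow> 'b \<Rightarrow> 'b) \<Rightarrow>
   ('a option \<Rightarrow> 'c set) \<Rightarrow> ('a option \<Rightarrow> 'a option \<Rightarrow> 'c \<Rightarrow> 'c) \<Rightarrow>
   ('a option \<Rightarrow> 'b \<Rightarrow> 'c) \<Rightarrow> bool" where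
  "sheaf_mor E rE F rF f \<longleftrightarrow>
     (\<forall>a. \<forall>x\<in>E a. f a x \<in> F a) \<and>
     (\<forall>a b. a \<le> b \<longrightarrow> (\<forall>x\<in>E b. rF b a (f b x) = f a (rE b a x)))"

text \<open>Epimorphism in the category of sheaves on L_+ (tested against all sheaves
 whose sections live in the type 'g; the theorem quantifies over all types 'g).\<close>
definition sheaf_epi ::
  "'g itself \<Rightarrow> ('a::complete_lattice option \<Rightarrow> 'b set) \<Rightarrow> ('a option \<Rightarrow> 'a option \<Rightarrow> 'b \<Rightarrow> 'b) \<Rightarrow>
   ('a option \<Rightarrow> 'c set) \<Rightarrow> ('a option \<Rightarrow> 'a option \<Rightarrow> 'c \<Rightarrow> 'c) \<Rightarrow>
   ('a option \<Rightarrow> 'b \<Rightarrow> 'c) \<Rightarrow> bool" where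
  "sheaf_epi T E rE F rF f \<longleftrightarrow>
     (\<forall>(G :: 'a option \<Rightarrow> 'g set) rG g h.
        is_sheaf G rG \<and> sheaf_mor F rF G rG g \<and> sheaf_mor F rF G rG h \<and>
        (\<forall>a. \<forall>x\<in>E a. g a (f a x) = h a (f a x)) \<longrightarrow>
        (\<forall>a. \<forall>y\<in>F a. g a y = h a y))"

definition sheaf_monic ::
  "'g itself \<Rightarrow> ('a::complete_lattice option \<Rightarrow> 'b set) \<Rightarrow> ('a option \<Rightarrow> 'a option \<Rightarrow> 'b \<Rightarrow> 'b) \<Rightarrow>
   ('a option \<Rightarrow> 'c set) \<Rightarrow> ('a option \<Rightarrow> 'a option \<Rightarrow> 'c \<Rightarrow> 'c) \<Rightarrow>
   ('a option \<Rightarrow> 'b \<Rightarrow> 'c) \<Rightarrow> bool" where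
  "sheaf_monic T E rE F rF f \<longleftrightarrow>
     (\<forall>(G :: 'a option \<Rightarrow> 'g set) rG g h.
        is_sheaf G rG \<and> sheaf_mor G rG E rE g \<and> sheaf_mor G rG E rE h \<and>
        (\<forall>a. \<forall>z\<in>G a. f a (g a z) = f a (h a z)) \<longrightarrow>
        (\<forall>a. \<forall>z\<in>G a. g a z = h a z))"

definition sheaf_iso ::
  "('a::complete_lattice option \<Rightarrow> 'b set) \<Rightarrow> ('a option \<Rightarrow> 'a option \<Rightarrow> 'b \<Rightarrow> 'b) \<Rightarrow>
   ('a option \<Rightarrow> 'c set) \<Rightarrow> ('a option \<Rightarrow> 'a option \<Rightarrow> 'c \<Rightarrow> 'c) \<Rightarrow>
   ('a option \<Rightarrow> 'b \<Rightarrow> 'c) \<Rightarrow> bool" where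
  "sheaf_iso E rE F rF f \<longleftrightarrow>
     (\<exists>g. sheaf_mor F rF E rE g \<and> (\<forall>a. \<forall>x\<in>E a. g a (f a x) = x) \<and>
          (\<forall>a. \<forall>y\<in>F a. f a (g a y) = y))"

text \<open>Stalk F_x = colim_{s > x} F(s): germ equivalence classes of pairs (s,u)
 with x < s, u in F s.\<close>
definition germ_rel :: "('a::complete_lattice option \<Rightarrow> 'b set) \<Rightarrow> ('a option \<Rightarrow> 'a option \<Rightarrow> 'b \<Rightarrow> 'b) \<Rightarrow>
   'a option \<Rightarrow> (('a option \<times> 'b) \<times> ('a option \<times> 'b)) set" where
  "germ_rel F r x = {((s,u),(t,v)). x < s \<and> u \<in> F s \<and> x < t \<and> v \<in> F t \<and>
       (\<exists>q. x < q \<and> q \<le> s \<and> q \<le> t \<and> r s q u = r t q v)}"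

definition stalk :: "('a::complete_lattice option \<Rightarrow> 'b set) \<Rightarrow> ('a option \<Rightarrow> 'a option \<Rightarrow> 'b \<Rightarrow> 'b) \<Rightarrow>
   'a option \<Rightarrow> ('a option \<times> 'b) set set" where
  "stalk F r x = (SIGMA s:{s. x < s}. F s) // germ_rel F r x"

definition stalk_map :: "('a::complete_lattice option \<Rightarrow> 'c set) \<Rightarrow> ('a option \<Rightarrow> 'a option \<Rightarrow> 'c \<Rightarrow> 'c) \<Rightarrow>
   ('a option \<Rightarrow> 'b \<Rightarrow> 'c) \<Rightarrow> 'a option \<Rightarrow> ('a option \<times> 'b) set \<Rightarrow> ('a option \<times> 'c) set" where
  "stalk_map F rF f x C = (\<Union>(s,u)\<in>C. germ_rel F rF x `` {(s, f s u)})"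

definition stalkwise_epi where
  "stalkwise_epi E rE F rF f \<longleftrightarrow> (\<forall>x. x \<noteq> Some top \<longrightarrow>
      (\<forall>y\<in>stalk F rF x. \<exists>z\<in>stalk E rE x. stalk_map F rF f x z = y))"

definition stalkwise_mono where
  "stalkwise_mono E rE F rF f \<longleftrightarrow> (\<forall>x. x \<noteq> Some top \<longrightarrow>
      inj_on (stalk_map F rF f x) (stalk E rE x))"

definition stalkwise_iso where
  "stalkwise_iso E rE F rF f \<longleftrightarrow> (\<forall>x. x \<noteq> Some top \<longrightarrow>
      bij_betw (stalk_map F rF f x) (stalk E rE x) (stalk F rF x))"

end

theory Submission
  imports Defs
begin

text \<open>Since the empty family covers the new bottom 0, every sheaf has exactly one section
 over 0.  Over a point a of L, a stalkwise monomorphism identifies the germs at 0 of two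
 sections with the same image; they therefore agree on some q with 0 < q \<le> a, and
 injectivity of the restriction to q makes them equal.  For a stalkwise epimorphism, the
 germ at any x < a of a section y over a lifts, so y has local preimages on a family of
 opens whose supremum is a.  This is already enough for epimorphisms; when f is also
 injective on sections the local preimages are compatible and glue to a global preimage, so
 f is bijective on sections and its inverse is a morphism.\<close>

lemma is_sheaf_imp_presheaf: "is_sheaf F r \<Longrightarrow> is_presheaf F r"
  unfolding is_sheaf_def by blast

lemma presheaf_restrict_in:
  "is_presheaf F r \<Longrightarrow> a \<le> b \<Longrightarrow> x \<in> F b \<Longrightarrow> r b a x \<in> F a"
  unfolding is_presheaf_def by blast

lemma presheaf_restrict_restrict:
  "is_presheaf F r \<Longrightarrow> a \<le> b \<Longrightarrow> b \<le> c \<Longrightarrow> x \<in> F c \<Longrightarrow> r b a (r c b x) = r c a x"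
  unfolding is_presheaf_def by blast

lemma presheaf_agree_below:
  assumes "is_presheaf F r" "m \<le> q" "q \<le> s" "q \<le> t" "u \<in> F s" "v \<in> F t"
    and "r s q u = r t q v"
  shows "r s m u = r t m v"
  using assms presheaf_restrict_restrict[of F r m q] by metis

lemma sheaf_mor_in: "sheaf_mor E rE F rF f \<Longrightarrow> x \<in> E a \<Longrightarrow> f a x \<in> F a"
  unfolding sheaf_mor_def by blast

lemma sheaf_mor_restrict:
  "sheaf_mor E rE F rF f \<Longrightarrow> a \<le> b \<Longrightarrow> x \<in> E b \<Longrightarrow> rF b a (f b x) = f a (rE b a x)"
  unfolding sheaf_mor_def by blast

lemma sheaf_glue:
  assumes "is_sheaf F r" "\<forall>b\<in>S. b \<le> a" "Sup S = a" "\<forall>b\<in>S. s b \<in> F b"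
    and "\<forall>b\<in>S. \<forall>c\<in>S. r b (inf b c) (s b) = r c (inf b c) (s c)"
  shows "\<exists>!x. x \<in> F a \<and> (\<forall>b\<in>S. r a b x = s b)"
  using assms(2-5) by (intro assms(1)[unfolded is_sheaf_def, THEN conjunct2, rule_format]) auto

lemma sheaf_None_ex1: "is_sheaf F r \<Longrightarrow> \<exists>!x. x \<in> F None"
  using sheaf_glue[of F r "{}" None] by (simp add: bot_option_def)

lemma sheaf_local:
  assumes F: "is_sheaf F r" and S: "\<forall>b\<in>S. b \<le> a" "Sup S = a"
    and "x \<in> F a" "y \<in> F a" "\<forall>b\<in>S. r a b x = r a b y"
  shows "x = y"
proof -
  have P: "is_presheaf F r" using F by (rule is_sheaf_imp_presheaf)
  have "\<exists>!z. z \<in> F a \<and> (\<forall>b\<in>S. r a b z = r a b x)"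
  proof (rule sheaf_glue[OF F S])
    show "\<forall>b\<in>S. r a b x \<in> F b" using S \<open>x \<in> F a\<close> presheaf_restrict_in[OF P] by blast
    show "\<forall>b\<in>S. \<forall>c\<in>S. r b (inf b c) (r a b x) = r c (inf b c) (r a c x)"
      using S \<open>x \<in> F a\<close> presheaf_restrict_restrict[OF P] by simp
  qed
  then show ?thesis using assms by auto
qed

lemma germ_rel_equiv:
  fixes F :: "'a::complete_linorder option \<Rightarrow> 'b set"
  assumes P: "is_presheaf F r"
  shows "equiv (SIGMA s:{s. x < s}. F s) (germ_rel F r x)"
proof (rule equivI)
  show "germ_rel F r x \<subseteq> (SIGMA s:{s. x < s}. F s) \<times> (SIGMA s:{s. x < s}. F s)"
    unfolding germ_rel_def by auto
  show "refl_on (SIGMA s:{s. x < s}. F s) (germ_rel F r x)"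
    unfolding refl_on_def germ_rel_def by auto
  show "sym (germ_rel F r x)"
    by (rule symI) (auto simp: germ_rel_def)
  show "trans (germ_rel F r x)"
  proof (rule transI, clarify)
    fix s u t v w z
    assume "((s, u), (t, v)) \<in> germ_rel F r x" "((t, v), (w, z)) \<in> germ_rel F r x"
    then obtain q1 q2 where q1: "x < q1" "q1 \<le> s" "q1 \<le> t" "r s q1 u = r t q1 v"
      and q2: "x < q2" "q2 \<le> t" "q2 \<le> w" "r t q2 v = r w q2 z"
      and mem: "x < s" "u \<in> F s" "v \<in> F t" "x < w" "z \<in> F w"
      unfolding germ_rel_def by auto
    let ?m = "min q1 q2"
    have "r s ?m u = r t ?m v"
      using presheaf_agree_below[OF P _ q1(2,3) mem(2,3) q1(4)] by simp
    also have "\<dots> = r w ?m z"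
      using presheaf_agree_below[OF P _ q2(2,3) mem(3,5) q2(4)] by simp
    moreover have "x < ?m" "?m \<le> s" "?m \<le> w"
      using q1(1,2) q2(1,3) by (simp_all add: min.coboundedI1 min.coboundedI2)
    ultimately show "((s, u), (w, z)) \<in> germ_rel F r x"
      using mem unfolding germ_rel_def by (simp only: mem_Collect_eq case_prod_conv) blast
  qed
qed

lemma germ_in_stalk: "x < s \<Longrightarrow> u \<in> F s \<Longrightarrow> germ_rel F r x `` {(s, u)} \<in> stalk F r x"
  unfolding stalk_def by (intro quotientI) simp

lemma stalk_elemE:
  assumes "Z \<in> stalk F r x"
  obtains s u where "x < s" "u \<in> F s" "Z = germ_rel F r x `` {(s, u)}"
  using assms unfolding stalk_def by (auto elim!: quotientE)

lemma germ_eq_iff: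
  fixes F :: "'a::complete_linorder option \<Rightarrow> 'b set"
  assumes "is_presheaf F r" "x < s" "u \<in> F s" "x < t" "v \<in> F t"
  shows "germ_rel F r x `` {(s, u)} = germ_rel F r x `` {(t, v)} \<longleftrightarrow>
         ((s, u), (t, v)) \<in> germ_rel F r x"
  using equiv_class_eq_iff[OF germ_rel_equiv[OF assms(1)]] assms(2-) by auto

lemma stalk_map_germ:
  fixes E :: "'a::complete_linorder option \<Rightarrow> 'b set"
  assumes PE: "is_presheaf E rE" and PF: "is_presheaf F rF"
    and f: "sheaf_mor E rE F rF f" and s: "x < s" "u \<in> E s"
  shows "stalk_map F rF f x (germ_rel E rE x `` {(s, u)}) = germ_rel F rF x `` {(s, f s u)}"
proof -
  have "germ_rel F rF x `` {(t, f t v)} = germ_rel F rF x `` {(s, f s u)}"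
    if "((s, u), (t, v)) \<in> germ_rel E rE x" for t v
  proof -
    from that obtain q where q: "x < q" "q \<le> s" "q \<le> t" "rE s q u = rE t q v"
      and t: "x < t" "v \<in> E t"
      unfolding germ_rel_def by auto
    have "rF t q (f t v) = rF s q (f s u)"
      using q t s sheaf_mor_restrict[OF f] by simp
    then have "((t, f t v), (s, f s u)) \<in> germ_rel F rF x"
      unfolding germ_rel_def using q t s sheaf_mor_in[OF f] by blast
    then show ?thesis by (rule equiv_class_eq[OF germ_rel_equiv[OF PF]])
  qed
  moreover have "((s, u), (s, u)) \<in> germ_rel E rE x"
    using equiv_class_self[OF germ_rel_equiv[OF PE]] s by auto
  ultimately show ?thesis unfolding stalk_map_def by blast
qed

lemma stalkwise_epi_local_preimages:
  fixes E :: "'a::complete_linorder option \<Rightarrow> 'b set"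
  assumes PE: "is_presheaf E rE" and PF: "is_presheaf F rF"
    and f: "sheaf_mor E rE F rF f" and epi: "stalkwise_epi E rE F rF f"
    and y: "y \<in> F a"
  shows "Sup {q. q \<le> a \<and> rF a q y \<in> f q ` E q} = a" (is "Sup ?S = a")
proof (rule antisym)
  show "Sup ?S \<le> a" by (rule Sup_least) blast
  have cofinal: "\<exists>q\<in>?S. x < q" if x: "x < a" for x
  proof -
    have "x \<noteq> Some top" using x top.extremum[of a] by (auto simp: top_option_def)
    then obtain Z where Z_in: "Z \<in> stalk E rE x"
      and Z: "stalk_map F rF f x Z = germ_rel F rF x `` {(a, y)}"
      using epi germ_in_stalk[where F = F and r = rF, OF x y] unfolding stalkwise_epi_def by blast
    from Z_in obtain s u where s: "x < s" "u \<in> E s" and "Z = germ_rel E rE x `` {(s, u)}"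
      by (rule stalk_elemE)
    with Z have "germ_rel F rF x `` {(s, f s u)} = germ_rel F rF x `` {(a, y)}"
      using stalk_map_germ[OF PE PF f] by simp
    then obtain q where q: "x < q" "q \<le> s" "q \<le> a" "rF s q (f s u) = rF a q y"
      using germ_eq_iff[OF PF s(1) sheaf_mor_in[OF f s(2)] x y]
      unfolding germ_rel_def by auto
    have "rF a q y = f q (rE s q u)"
      using q s sheaf_mor_restrict[OF f] by simp
    then have "q \<in> ?S"
      using q presheaf_restrict_in[OF PE q(2) s(2)] by blast
    with q show ?thesis by blast
  qed
  show "a \<le> Sup ?S"
  proof (rule ccontr)
    assume "\<not> a \<le> Sup ?S"
    then obtain q where "q \<in> ?S" "Sup ?S < q" using cofinal[of "Sup ?S"] not_le by blast
    then show False using Sup_upper[of q ?S] by simp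
  qed
qed

lemma stalkwise_mono_imp_inj_on:
  fixes E :: "'a::complete_linorder option \<Rightarrow> 'b set"
  assumes E: "is_mono_sheaf E rE" and PF: "is_presheaf F rF"
    and f: "sheaf_mor E rE F rF f" and mono: "stalkwise_mono E rE F rF f"
  shows "inj_on (f a) (E a)"
proof (cases a)
  case None
  then show ?thesis
    using E sheaf_None_ex1 unfolding is_mono_sheaf_def inj_on_def by metis
next
  case (Some b)
  have PE: "is_presheaf E rE"
    using E is_sheaf_imp_presheaf unfolding is_mono_sheaf_def by blast
  show ?thesis
  proof (rule inj_onI)
    fix e1 e2 assume e: "e1 \<in> E a" "e2 \<in> E a" "f a e1 = f a e2"
    have a: "None < a" using Some by simp
    have "stalk_map F rF f None (germ_rel E rE None `` {(a, e1)}) =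
          stalk_map F rF f None (germ_rel E rE None `` {(a, e2)})"
      using e stalk_map_germ[OF PE PF f a] by simp
    moreover have "inj_on (stalk_map F rF f None) (stalk E rE None)"
      using mono unfolding stalkwise_mono_def by simp
    ultimately have "germ_rel E rE None `` {(a, e1)} = germ_rel E rE None `` {(a, e2)}"
      using e germ_in_stalk[OF a] by (meson inj_onD)
    then obtain q where q: "None < q" "q \<le> a" "rE a q e1 = rE a q e2"
      using germ_eq_iff[OF PE a e(1) a e(2)] unfolding germ_rel_def by auto
    then obtain c where "q = Some c" by (cases q) auto
    with q E Some e show "e1 = e2"
      unfolding is_mono_sheaf_def by (auto dest: inj_onD)
  qed
qed

lemma inj_on_sections_imp_sheaf_monic:
  assumes "\<And>a. inj_on (f a) (E a)"
  shows "sheaf_monic T E rE F rF f"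
  using assms unfolding sheaf_monic_def sheaf_mor_def inj_on_def by blast

lemma stalkwise_epi_imp_sheaf_epi:
  fixes E :: "'a::complete_linorder option \<Rightarrow> 'b set"
  assumes PE: "is_presheaf E rE" and PF: "is_presheaf F rF"
    and f: "sheaf_mor E rE F rF f" and epi: "stalkwise_epi E rE F rF f"
  shows "sheaf_epi TYPE('g) E rE F rF f"
  unfolding sheaf_epi_def
proof (intro allI impI ballI, elim conjE)
  fix G :: "'a option \<Rightarrow> 'g set" and rG g h a y
  assume G: "is_sheaf G rG" and g: "sheaf_mor F rF G rG g" and h: "sheaf_mor F rF G rG h"
    and eq: "\<forall>a. \<forall>x\<in>E a. g a (f a x) = h a (f a x)" and y: "y \<in> F a"
  let ?S = "{q. q \<le> a \<and> rF a q y \<in> f q ` E q}"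
  show "g a y = h a y"
  proof (rule sheaf_local[OF G _ stalkwise_epi_local_preimages[OF PE PF f epi y]])
    show "\<forall>q\<in>?S. rG a q (g a y) = rG a q (h a y)"
      using y eq sheaf_mor_restrict[OF g] sheaf_mor_restrict[OF h] by auto
  qed (use y sheaf_mor_in[OF g] sheaf_mor_in[OF h] in auto)
qed

lemma local_preimages_imp_surj:
  fixes E :: "'a::complete_lattice option \<Rightarrow> 'b set"
  assumes E: "is_sheaf E rE" and F: "is_sheaf F rF" and f: "sheaf_mor E rE F rF f"
    and inj: "\<And>a. inj_on (f a) (E a)"
    and cover: "Sup {q. q \<le> a \<and> rF a q y \<in> f q ` E q} = a" (is "Sup ?S = a")
    and y: "y \<in> F a"
  shows "y \<in> f a ` E a"
proof -
  have PE: "is_presheaf E rE" and PF: "is_presheaf F rF"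
    using E F by (blast intro: is_sheaf_imp_presheaf)+
  have S_le: "\<forall>q\<in>?S. q \<le> a" by blast
  define s where "s q = inv_into (E q) (f q) (rF a q y)" for q
  have s: "s q \<in> E q" "f q (s q) = rF a q y" if "q \<in> ?S" for q
    using that unfolding s_def by (auto intro: inv_into_into f_inv_into_f)
  have s_restrict: "f m (rE q m (s q)) = rF a m y" if q: "q \<in> ?S" and "m \<le> q" for q m
  proof -
    have "f m (rE q m (s q)) = rF q m (rF a q y)"
      using sheaf_mor_restrict[OF f \<open>m \<le> q\<close> s(1)[OF q]] s(2)[OF q] by simp
    also have "\<dots> = rF a m y"
      using presheaf_restrict_restrict[OF PF \<open>m \<le> q\<close> _ y] q by blast
    finally show ?thesis .
  qed
  have "\<exists>!e. e \<in> E a \<and> (\<forall>q\<in>?S. rE a q e = s q)"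
  proof (rule sheaf_glue[OF E S_le cover])
    show "\<forall>q\<in>?S. s q \<in> E q" using s(1) by blast
    show "\<forall>q\<in>?S. \<forall>c\<in>?S. rE q (inf q c) (s q) = rE c (inf q c) (s c)"
    proof (intro ballI)
      fix q c assume q: "q \<in> ?S" and c: "c \<in> ?S"
      have "f (inf q c) (rE q (inf q c) (s q)) = f (inf q c) (rE c (inf q c) (s c))"
        using s_restrict[OF q inf_le1] s_restrict[OF c inf_le2] by simp
      then show "rE q (inf q c) (s q) = rE c (inf q c) (s c)"
        using inj_onD[OF inj] presheaf_restrict_in[OF PE inf_le1 s(1)[OF q]]
          presheaf_restrict_in[OF PE inf_le2 s(1)[OF c]] by blast
    qed
  qed
  then obtain e where e: "e \<in> E a" "\<forall>q\<in>?S. rE a q e = s q" by blast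
  have "\<forall>q\<in>?S. rF a q (f a e) = rF a q y"
    using sheaf_mor_restrict[OF f _ e(1)] e(2) s(2) by (metis (no_types, lifting) S_le)
  then have "f a e = y"
    using sheaf_local[OF F S_le cover sheaf_mor_in[OF f e(1)] y] by blast
  with e show ?thesis by blast
qed

lemma bij_sections_imp_sheaf_iso:
  assumes PE: "is_presheaf E rE" and PF: "is_presheaf F rF"
    and f: "sheaf_mor E rE F rF f" and bij: "\<And>a. bij_betw (f a) (E a) (F a)"
  shows "sheaf_iso E rE F rF f"
proof -
  define g where "g a = inv_into (E a) (f a)" for a
  have g: "g a y \<in> E a" "f a (g a y) = y" if "y \<in> F a" for a y
  proof -
    have "y \<in> f a ` E a" using that bij_betw_imp_surj_on[OF bij] by simp
    then show "g a y \<in> E a" "f a (g a y) = y"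
      unfolding g_def by (simp_all add: inv_into_into f_inv_into_f)
  qed
  have gf: "g a (f a x) = x" if "x \<in> E a" for a x
    using bij_betw_inv_into_left[OF bij that] unfolding g_def .
  have g_restrict: "rE b a (g b y) = g a (rF b a y)" if ab: "a \<le> b" and y: "y \<in> F b" for a b y
  proof -
    have "rE b a (g b y) = g a (f a (rE b a (g b y)))"
      using gf presheaf_restrict_in[OF PE ab g(1)[OF y]] by simp
    also have "\<dots> = g a (rF b a y)"
      using sheaf_mor_restrict[OF f ab g(1)[OF y]] g(2)[OF y] by simp
    finally show ?thesis .
  qed
  have "sheaf_mor F rF E rE g"
    unfolding sheaf_mor_def using g(1) g_restrict by simp
  then show ?thesis unfolding sheaf_iso_def using g(2) gf by blast
qed

lemma stalkwise_iso_imp_mono: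
  "stalkwise_iso E rE F rF f \<Longrightarrow> stalkwise_mono E rE F rF f"
  unfolding stalkwise_iso_def stalkwise_mono_def by (blast intro: bij_betw_imp_inj_on)

lemma stalkwise_iso_imp_epi:
  "stalkwise_iso E rE F rF f \<Longrightarrow> stalkwise_epi E rE F rF f"
  unfolding stalkwise_iso_def stalkwise_epi_def
  by (metis bij_betw_imp_surj_on imageE)

theorem lemma32:
  fixes E :: "('a::{complete_linorder, dense_order}) option \<Rightarrow> 'b set"
    and rE :: "'a option \<Rightarrow> 'a option \<Rightarrow> 'b \<Rightarrow> 'b"
    and F :: "'a option \<Rightarrow> 'c set"
    and rF :: "'a option \<Rightarrow> 'a option \<Rightarrow> 'c \<Rightarrow> 'c"
    and f :: "'a option \<Rightarrow> 'b \<Rightarrow> 'c"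
  assumes "is_mono_sheaf E rE" and "is_mono_sheaf F rF"
    and "sheaf_mor E rE F rF f"
  shows "(stalkwise_epi E rE F rF f \<longrightarrow> sheaf_epi TYPE('g) E rE F rF f) \<and>
         (stalkwise_mono E rE F rF f \<longrightarrow> sheaf_monic TYPE('h) E rE F rF f) \<and>
         (stalkwise_iso E rE F rF f \<longrightarrow> sheaf_iso E rE F rF f)"
proof (intro conjI impI)
  have E: "is_sheaf E rE" and F: "is_sheaf F rF"
    using assms(1,2) unfolding is_mono_sheaf_def by blast+
  note PE = is_sheaf_imp_presheaf[OF E] and PF = is_sheaf_imp_presheaf[OF F]
  note inj = stalkwise_mono_imp_inj_on[OF assms(1) PF assms(3)]
  show "sheaf_epi TYPE('g) E rE F rF f" if "stalkwise_epi E rE F rF f"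
    using stalkwise_epi_imp_sheaf_epi[OF PE PF assms(3) that] .
  show "sheaf_monic TYPE('h) E rE F rF f" if "stalkwise_mono E rE F rF f"
    using inj_on_sections_imp_sheaf_monic inj[OF that] by blast
  show "sheaf_iso E rE F rF f" if "stalkwise_iso E rE F rF f"
  proof (rule bij_sections_imp_sheaf_iso[OF PE PF assms(3)])
    fix a
    note mono = stalkwise_iso_imp_mono[OF that] and epi = stalkwise_iso_imp_epi[OF that]
    have "f a ` E a = F a"
      using local_preimages_imp_surj[OF E F assms(3) inj[OF mono]]
        stalkwise_epi_local_preimages[OF PE PF assms(3) epi] sheaf_mor_in[OF assms(3)]
      by blast
    then show "bij_betw (f a) (E a) (F a)" using inj[OF mono] by (simp add: bij_betw_def)
  qed
qed

end
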